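(* Let $x_1,\dots,x_n\in\mathbb R^d$, with $n\ge d+1$, be such that the $(d+1)\times n$ matrix with columns $\binom{1}{x_1},\dots,\binom{1}{x_n}$ has all maximal minors positive. Let $\pi\in S_n$ be such that the matrix with columns $\binom{1}{x_{\pi(1)}},\dots,\binom{1}{x_{\pi(n)}}$ also has all maximal minors positive. Then the map $x_i\mapsto x_{\pi(i)}$ is a combinatorial automorphism of the polytope $P=\operatorname{conv}(x_1,\dots,x_n)$, i.e. it induces an automorphism of the face lattice of $P$. *)

theory Defs
  imports "HOL-Analysis.Analysis"
begin

definition lift_col :: "real^'d::{finite,linorder} \<Rightarrow> real list" where
  "lift_col v = 1 # map (\<lambda>k. v $ k) (sorted_list_of_set (UNIV :: 'd set))"

definition ldet :: "nat \<Rightarrow> (nat \<Rightarrow> nat \<Rightarrow> real) \<Rightarrow> real" where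
  "ldet m M = (\<Sum>p | p permutes {..<m}. of_int (sign p) * (\<Prod>i<m. M i (p i)))"

definition positive_position :: "nat \<Rightarrow> (nat \<Rightarrow> real^'d::{finite,linorder}) \<Rightarrow> bool" where
  "positive_position n x \<longleftrightarrow>
     (\<forall>s. (\<forall>k < CARD('d) + 1. s k < n) \<and> strict_mono_on {..<CARD('d) + 1} s \<longrightarrow>
        ldet (CARD('d) + 1) (\<lambda>r c. lift_col (x (s c)) ! r) > 0)"

end

theory Submission
  imports Defs Jordan_Normal_Form.Determinant
begin

text \<open>For a set T of d labels, the function y \<mapsto> det(lift y, lift x(T)) is affine and vanishes on
  the points x(t), t \<in> T; at a point x(j) with j \<notin> T it is (-1)^#{t \<in> T. t < j} times the maximal
  minor on T \<union> {j}, so positivity of the minors fixes its sign. Hence T is the label set of a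
  facet iff Gale's evenness condition holds, and since every face is an intersection of facets,
  the family of label sets of faces depends only on n and d. It is therefore the same for the
  relabelled configuration x \<circ> \<pi>, which means that \<pi> permutes the label sets of faces.\<close>

definition colmat :: "nat \<Rightarrow> (nat \<Rightarrow> real list) \<Rightarrow> real mat" where
  "colmat m cs = mat m m (\<lambda>(r, c). cs c ! r)"

definition lin_form :: "nat \<Rightarrow> (nat \<Rightarrow> real) \<Rightarrow> real list \<Rightarrow> real" where
  "lin_form m v l = (\<Sum>r<m. v r * l ! r)"

lemma colmat_carrier [simp]: "colmat m cs \<in> carrier_mat m m"
  by (simp add: colmat_def)

lemma ldet_eq_det_colmat: "ldet m (\<lambda>r c. cs c ! r) = det (colmat m cs)"
proof -
  have "det (colmat m cs) =
      (\<Sum>p | p permutes {..<m}. of_int (sign p) * (\<Prod>i<m. colmat m cs $$ (i, p i)))"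
    unfolding det_def colmat_def by (simp add: atLeast0LessThan)
  also have "\<dots> = ldet m (\<lambda>r c. cs c ! r)"
    unfolding ldet_def
  proof (rule sum.cong [OF refl])
    fix p assume "p \<in> {p. p permutes {..<m}}"
    then have "\<And>i. i < m \<Longrightarrow> p i < m"
      using permutes_in_image by fastforce
    then show "of_int (sign p) * (\<Prod>i<m. colmat m cs $$ (i, p i)) =
        of_int (sign p) * (\<Prod>i<m. cs (p i) ! i)"
      by (simp add: colmat_def)
  qed
  finally show ?thesis by simp
qed

lemma lin_form_eq_0_if_det_nonzero:
  assumes "det (colmat m cs) \<noteq> 0" and "\<And>c. c < m \<Longrightarrow> lin_form m v (cs c) = 0" and "r < m"
  shows "v r = 0"
proof (rule ccontr)
  assume "v r \<noteq> 0"
  let ?A = "colmat m cs"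
  have "vec m v \<noteq> 0\<^sub>v m"
  proof
    assume "vec m v = 0\<^sub>v m"
    then have "vec_index (vec m v) r = vec_index (0\<^sub>v m) r" by simp
    with \<open>v r \<noteq> 0\<close> \<open>r < m\<close> show False by simp
  qed
  moreover have "?A\<^sup>T *\<^sub>v vec m v = 0\<^sub>v m"
  proof (rule eq_vecI)
    fix c assume c: "c < dim_vec (0\<^sub>v m :: real vec)"
    then have "vec_index (?A\<^sup>T *\<^sub>v vec m v) c = lin_form m v (cs c)"
      by (auto simp: colmat_def lin_form_def scalar_prod_def row_def atLeast0LessThan mult.commute
          intro!: sum.cong)
    then show "vec_index (?A\<^sup>T *\<^sub>v vec m v) c = vec_index (0\<^sub>v m) c"
      using c assms(2) by simp
  qed (simp add: colmat_def)
  ultimately have "det ?A\<^sup>T = 0"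
    by (subst det_0_iff_vec_prod_zero [of _ m]) (auto intro!: exI [of _ "vec m v"])
  with assms(1) det_transpose [OF colmat_carrier] show False by simp
qed

lemma length_lift_col [simp]: "length (lift_col (v :: real^'d::{finite,linorder})) = CARD('d) + 1"
  by (simp add: lift_col_def)

lemma lift_col_nth_0 [simp]: "lift_col v ! 0 = 1"
  by (simp add: lift_col_def)

lemma lift_col_nth_Suc:
  "i < CARD('d) \<Longrightarrow> lift_col (v :: real^'d::{finite,linorder}) ! Suc i = v $ (sorted_list_of_set UNIV ! i)"
  by (simp add: lift_col_def)

lemma bij_betw_nth_sorted_UNIV:
  "bij_betw (\<lambda>i. sorted_list_of_set (UNIV :: 'd::{finite,linorder} set) ! i) {..<CARD('d)} UNIV"
  using bij_betw_nth [of "sorted_list_of_set (UNIV :: 'd set)"] by auto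

lemma inner_eq_sum_sorted_coords:
  "(a :: real^'d::{finite,linorder}) \<bullet> y =
     (\<Sum>i<CARD('d). a $ (sorted_list_of_set UNIV ! i) * y $ (sorted_list_of_set UNIV ! i))"
  unfolding inner_vec_def
  using sum.reindex_bij_betw [OF bij_betw_nth_sorted_UNIV, of "\<lambda>k. a $ k * y $ k"] by simp

lemma lin_form_lift_col:
  "lin_form (CARD('d) + 1) C (lift_col (y :: real^'d::{finite,linorder})) =
     C 0 + (\<Sum>i<CARD('d). C (Suc i) * y $ (sorted_list_of_set UNIV ! i))"
  unfolding lin_form_def by (simp add: sum.lessThan_Suc_shift lift_col_nth_Suc del: sum.lessThan_Suc)

lemma lin_form_lift_col_affine:
  "\<exists>(c :: real^'d::{finite,linorder}) c0. \<forall>y. lin_form (CARD('d) + 1) C (lift_col y) = c \<bullet> y + c0"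
proof -
  let ?e = "sorted_list_of_set (UNIV :: 'd set)"
  define c :: "real^'d::{finite,linorder}" where "c = (\<chi> k. C (Suc (inv_into {..<CARD('d)} (\<lambda>i. ?e ! i) k)))"
  have "c $ (?e ! i) = C (Suc i)" if "i < CARD('d)" for i
    unfolding c_def using bij_betw_inv_into_left [OF bij_betw_nth_sorted_UNIV [where 'd='d]] that
    by simp
  then have "\<forall>y. lin_form (CARD('d) + 1) C (lift_col y) = c \<bullet> y + C 0"
    unfolding lin_form_lift_col inner_eq_sum_sorted_coords by simp
  then show ?thesis by blast
qed

definition hyperplane_form :: "real^'d::{finite,linorder} \<Rightarrow> real \<Rightarrow> nat \<Rightarrow> real" where
  "hyperplane_form a b r = (if r = 0 then - b else a $ (sorted_list_of_set UNIV ! (r - 1)))"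

lemma lin_form_hyperplane_form:
  "lin_form (CARD('d) + 1) (hyperplane_form a b) (lift_col (y :: real^'d::{finite,linorder})) = a \<bullet> y - b"
  unfolding lin_form_lift_col by (simp add: inner_eq_sum_sorted_coords hyperplane_form_def)

lemma hyperplane_form_nonzero:
  assumes "(a :: real^'d::{finite,linorder}) \<noteq> 0"
  obtains r where "r < CARD('d) + 1" "hyperplane_form a b r \<noteq> 0"
proof -
  obtain k where "a $ k \<noteq> 0"
    using assms Finite_Cartesian_Product.vec_eq_iff [of a 0] by auto
  moreover obtain i where "i < CARD('d)" "sorted_list_of_set (UNIV :: 'd set) ! i = k"
    using bij_betw_nth_sorted_UNIV [where 'd='d] by (metis bij_betw_iff_bijections UNIV_I lessThan_iff)
  ultimately show ?thesis by (intro that [of "Suc i"]) (auto simp: hyperplane_form_def)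
qed

definition lifted_minor :: "(nat \<Rightarrow> real^'d::{finite,linorder}) \<Rightarrow> nat set \<Rightarrow> real" where
  "lifted_minor x S = det (colmat (CARD('d) + 1) (\<lambda>c. lift_col (x (sorted_list_of_set S ! c))))"

definition bordered_cols ::
    "(nat \<Rightarrow> real^'d::{finite,linorder}) \<Rightarrow> nat set \<Rightarrow> real^'d::{finite,linorder} \<Rightarrow>
      nat \<Rightarrow> real list" where
  "bordered_cols x T y c = (if c = 0 then lift_col y else lift_col (x (sorted_list_of_set T ! (c - 1))))"

definition bordered_minor ::
    "(nat \<Rightarrow> real^'d::{finite,linorder}) \<Rightarrow> nat set \<Rightarrow> real^'d::{finite,linorder} \<Rightarrow> real" where
  "bordered_minor x T y = det (colmat (CARD('d) + 1) (bordered_cols x T y))"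

lemma bordered_minor_eq_lin_form:
  "\<exists>C. \<forall>y. bordered_minor x T y = lin_form (CARD('d) + 1) C (lift_col (y :: real^'d::{finite,linorder}))"
proof -
  let ?m = "CARD('d) + 1"
  define C where "C i = cofactor (colmat ?m (bordered_cols x T 0)) i 0" for i
  have "bordered_minor x T y = lin_form ?m C (lift_col y)" for y
  proof -
    have "bordered_minor x T y =
        (\<Sum>i<?m. colmat ?m (bordered_cols x T y) $$ (i, 0) * cofactor (colmat ?m (bordered_cols x T y)) i 0)"
      unfolding bordered_minor_def by (rule laplace_expansion_column) auto
    also have "\<dots> = lin_form ?m C (lift_col y)"
      unfolding lin_form_def
    proof (rule sum.cong [OF refl])
      fix i assume i: "i \<in> {..<?m}"
      have "mat_delete (colmat ?m (bordered_cols x T y)) i 0 = mat_delete (colmat ?m (bordered_cols x T 0)) i 0"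
        by (rule eq_matI) (auto simp: mat_delete_def colmat_def bordered_cols_def)
      then show "colmat ?m (bordered_cols x T y) $$ (i, 0) * cofactor (colmat ?m (bordered_cols x T y)) i 0 =
          C i * lift_col y ! i"
        using i by (simp add: C_def cofactor_def colmat_def bordered_cols_def)
    qed
    finally show ?thesis .
  qed
  then show ?thesis by blast
qed

lemma bordered_minor_affine:
  "\<exists>(c :: real^'d::{finite,linorder}) c0. \<forall>y. bordered_minor x T y = c \<bullet> y + c0"
  using bordered_minor_eq_lin_form [of x T] lin_form_lift_col_affine by metis

lemma bordered_minor_at_member:
  assumes "finite T" "card T = CARD('d)" "t \<in> T"
  shows "bordered_minor (x :: nat \<Rightarrow> real^'d::{finite,linorder}) T (x t) = 0"
proof -
  let ?m = "CARD('d) + 1"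
  obtain k where k: "k < length (sorted_list_of_set T)" "sorted_list_of_set T ! k = t"
    using assms by (metis in_set_conv_nth set_sorted_list_of_set)
  have "k < CARD('d)" using k assms by simp
  then show ?thesis
    unfolding bordered_minor_def
  proof (intro det_identical_columns [of _ ?m 0 "Suc k"])
    show "col (colmat ?m (bordered_cols x T (x t))) 0 = col (colmat ?m (bordered_cols x T (x t))) (Suc k)"
      using \<open>k < CARD('d)\<close> k by (intro eq_vecI) (auto simp: colmat_def bordered_cols_def)
  qed auto
qed

lemma insort_eq_take_drop:
  assumes "sorted xs"
  shows "insort a xs =
    take (length (filter (\<lambda>y. y < a) xs)) xs @ a # drop (length (filter (\<lambda>y. y < a) xs)) xs"
  using assms
proof (induction xs)
  case (Cons y ys)
  show ?case
  proof (cases "a \<le> y")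
    case True
    with Cons.prems have "filter (\<lambda>z. z < a) (y # ys) = []"
      by (auto simp: filter_empty_conv)
    with True show ?thesis by simp
  next
    case False
    with Cons show ?thesis by simp
  qed
qed simp

lemma swap_col_to_front_eq_bordered_cols:
  assumes "finite T" "card T = CARD('d)" "j \<notin> T"
  shows "swap_col_to_front (colmat (CARD('d) + 1) (\<lambda>c. lift_col (x (sorted_list_of_set (insert j T) ! c))))
           (card {t \<in> T. t < j}) =
         colmat (CARD('d) + 1) (bordered_cols (x :: nat \<Rightarrow> real^'d::{finite,linorder}) T (x j))"
proof -
  let ?m = "CARD('d) + 1"
  let ?st = "sorted_list_of_set T"
  let ?s = "sorted_list_of_set (insert j T)"
  let ?A = "colmat ?m (\<lambda>c. lift_col (x (?s ! c)))"
  define q where "q = card {t \<in> T. t < j}"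
  have "length (filter (\<lambda>t. t < j) ?st) = q"
    using assms(1) unfolding q_def by (simp add: distinct_length_filter Collect_conj_eq Int_commute)
  then have s: "?s = take q ?st @ j # drop q ?st"
    using assms insort_eq_take_drop [of ?st j] sorted_list_of_set_insert_remove [of T j] by simp
  have lst: "length ?st = CARD('d)" using assms by simp
  have qm: "q < ?m"
    using \<open>length (filter (\<lambda>t. t < j) ?st) = q\<close> length_filter_le [of "\<lambda>t. t < j" ?st] lst by linarith
  have "swap_col_to_front ?A q =
      mat ?m ?m (\<lambda>(i, c). if c = 0 then ?A $$ (i, q) else if c \<le> q then ?A $$ (i, c - 1) else ?A $$ (i, c))"
    by (rule swap_col_to_front_result [OF colmat_carrier qm])
  also have "\<dots> = colmat ?m (bordered_cols x T (x j))"
  proof (rule eq_matI)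
    fix i c assume i: "i < dim_row (colmat ?m (bordered_cols x T (x j)))"
      and c: "c < dim_col (colmat ?m (bordered_cols x T (x j)))"
    have "?s ! q = j" using s qm lst by (simp add: nth_append)
    moreover have "?s ! (c - 1) = ?st ! (c - 1)" if "c \<noteq> 0" "c \<le> q"
    proof -
      have "c - 1 < q" "length (take q ?st) = q" using that qm lst by auto
      then show ?thesis using s by (simp add: nth_append)
    qed
    moreover have "?s ! c = ?st ! (c - 1)" if "c \<noteq> 0" "\<not> c \<le> q"
      using that s qm c lst by (auto simp: nth_append min_def nth_Cons' colmat_def split: if_splits)
    ultimately show "mat ?m ?m (\<lambda>(i, c). if c = 0 then ?A $$ (i, q) else if c \<le> q then ?A $$ (i, c - 1)
        else ?A $$ (i, c)) $$ (i, c) = colmat ?m (bordered_cols x T (x j)) $$ (i, c)"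
      using i c qm by (auto simp: colmat_def bordered_cols_def)
  qed (auto simp: colmat_def)
  finally show ?thesis unfolding q_def .
qed

lemma bordered_minor_at_nonmember:
  assumes "finite T" "card T = CARD('d)" "j \<notin> T"
  shows "bordered_minor (x :: nat \<Rightarrow> real^'d::{finite,linorder}) T (x j) =
           (-1) ^ card {t \<in> T. t < j} * lifted_minor x (insert j T)"
proof -
  have "card {t \<in> T. t < j} < CARD('d) + 1"
    using card_mono [OF assms(1), of "{t \<in> T. t < j}"] assms(2) by auto
  then show ?thesis
    using swap_col_to_front_det [OF colmat_carrier]
    unfolding bordered_minor_def lifted_minor_def swap_col_to_front_eq_bordered_cols [OF assms, symmetric]
    by blast
qed

lemma bordered_minor_proportional:
  fixes x :: "nat \<Rightarrow> real^'d::{finite,linorder}"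
  assumes "finite T" "card T = CARD('d)" "\<And>t. t \<in> T \<Longrightarrow> a \<bullet> x t = b"
    and "bordered_minor x T z \<noteq> 0"
  shows "(a \<bullet> z - b) * bordered_minor x T y = bordered_minor x T z * (a \<bullet> y - b)"
proof -
  let ?m = "CARD('d) + 1"
  obtain C where C: "\<And>y. bordered_minor x T y = lin_form ?m C (lift_col y)"
    using bordered_minor_eq_lin_form by blast
  define g where "g = a \<bullet> z - b"
  define h where "h = bordered_minor x T z"
  \<comment> \<open>v represents y \<mapsto> g * bordered_minor x T y - h * (a \<bullet> y - b), which vanishes on all
    columns of the nonsingular bordered matrix at z, so v = 0.\<close>
  define v where "v r = g * C r - h * hyperplane_form a b r" for r
  have lin_v: "lin_form ?m v (lift_col w) = g * bordered_minor x T w - h * (a \<bullet> w - b)" for w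
  proof -
    have "lin_form ?m v (lift_col w) =
        g * lin_form ?m C (lift_col w) - h * lin_form ?m (hyperplane_form a b) (lift_col w)"
      by (simp add: v_def lin_form_def sum_subtractf sum_distrib_left algebra_simps)
    then show ?thesis unfolding C [symmetric] lin_form_hyperplane_form .
  qed
  have "v r = 0" if "r < ?m" for r
  proof (rule lin_form_eq_0_if_det_nonzero [OF _ _ that])
    show "det (colmat ?m (bordered_cols x T z)) \<noteq> 0"
      using assms(4) by (simp add: bordered_minor_def)
    fix c assume c: "c < ?m"
    show "lin_form ?m v (bordered_cols x T z c) = 0"
    proof (cases "c = 0")
      case True
      then show ?thesis using lin_v [of z] by (simp add: bordered_cols_def g_def h_def)
    next
      case False
      with c assms(1,2) have "sorted_list_of_set T ! (c - 1) \<in> T"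
        by (metis Suc_less_eq add.commute add_diff_inverse_nat less_one nth_mem plus_1_eq_Suc
            set_sorted_list_of_set length_sorted_list_of_set)
      with False show ?thesis
        using lin_v bordered_minor_at_member [OF assms(1,2)] assms(3) by (simp add: bordered_cols_def)
    qed
  qed
  then have "lin_form ?m v (lift_col y) = 0" by (simp add: lin_form_def)
  then show ?thesis using lin_v [of y] by (simp add: g_def h_def)
qed

lemma even_iff_even_if_proportional:
  fixes g0 g1 h0 h1 :: real
  assumes "g0 * h1 = h0 * g1" "g0 < 0" "g1 < 0" "0 < (-1) ^ p * h0" "0 < (-1) ^ q * h1"
  shows "even p \<longleftrightarrow> even q"
proof (rule ccontr)
  assume "even p \<noteq> even q"
  then have "h0 * h1 < 0"
    using assms(4,5) by (auto simp: minus_one_power_iff mult_pos_neg mult_neg_pos split: if_splits)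
  moreover have "0 < h0 * h1"
  proof -
    have "h1 \<noteq> 0" using assms(5) by auto
    then have "0 < (g0 * h1) * (g0 * h1)"
      using assms(2) not_real_square_gt_zero by fastforce
    also have "\<dots> = (g0 * h1) * (h0 * g1)" by (simp only: assms(1))
    also have "\<dots> = (g0 * g1) * (h0 * h1)" by (simp only: mult_ac)
    finally show ?thesis using mult_neg_neg [OF assms(2,3)] by (auto simp: zero_less_mult_iff)
  qed
  ultimately show False by simp
qed

lemma face_eq_convex_hull_labels:
  fixes x :: "'i \<Rightarrow> 'a::euclidean_space"
  assumes "finite A" "F face_of convex hull (x ` A)"
  shows "F = convex hull (x ` {i \<in> A. x i \<in> F})"
proof -
  obtain S where S: "S \<subseteq> x ` A" "F = convex hull S"
    using face_of_convex_hull_subset [OF finite_imp_compact assms(2)] assms(1) by blast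
  then have "S \<subseteq> x ` {i \<in> A. x i \<in> F}"
    using hull_subset [of S convex] by blast
  then have "F \<subseteq> convex hull (x ` {i \<in> A. x i \<in> F})"
    using S(2) hull_mono by blast
  moreover have "convex hull (x ` {i \<in> A. x i \<in> F}) \<subseteq> F"
    using face_of_imp_convex [OF assms(2)] by (intro hull_minimal) auto
  ultimately show ?thesis by blast
qed

lemma face_subset_iff_labels_subset:
  fixes x :: "'i \<Rightarrow> 'a::euclidean_space"
  assumes "finite A" "F face_of convex hull (x ` A)" "G face_of convex hull (x ` A)"
  shows "F \<subseteq> G \<longleftrightarrow> {i \<in> A. x i \<in> F} \<subseteq> {i \<in> A. x i \<in> G}"
proof
  assume "{i \<in> A. x i \<in> F} \<subseteq> {i \<in> A. x i \<in> G}"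
  then have "convex hull (x ` {i \<in> A. x i \<in> F}) \<subseteq> convex hull (x ` {i \<in> A. x i \<in> G})"
    by (intro hull_mono image_mono)
  then show "F \<subseteq> G"
    by (simp only: face_eq_convex_hull_labels [OF assms(1,2), symmetric]
        face_eq_convex_hull_labels [OF assms(1,3), symmetric])
qed auto

lemma face_eq_Int_facets:
  assumes "polyhedron S" "F face_of S" "F \<noteq> {}"
  shows "F = S \<inter> \<Inter>{G. G facet_of S \<and> F \<subseteq> G}"
proof (cases "F = S")
  case True
  have "\<not> G facet_of S" if "S \<subseteq> G" for G
    using that facet_of_imp_subset [of G S] by (metis facet_of_irrefl subset_antisym)
  with True show ?thesis by auto
next
  case False
  then show ?thesis
    using face_of_polyhedron [OF assms False] face_of_imp_subset [OF assms(2)] by blast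
qed

definition face_labels :: "('i \<Rightarrow> 'a::euclidean_space) \<Rightarrow> 'i set \<Rightarrow> 'i set set" where
  "face_labels x A = (\<lambda>F. {i \<in> A. x i \<in> F}) ` {F. F face_of convex hull (x ` A)}"

lemma face_labels_reindex:
  assumes "\<pi> permutes A"
  shows "image \<pi> ` face_labels (\<lambda>i. x (\<pi> i)) A = face_labels x A"
proof -
  have "(\<lambda>i. x (\<pi> i)) ` A = x ` A"
    using permutes_image [OF assms] by (metis image_image)
  moreover have "\<pi> ` {i \<in> A. x (\<pi> i) \<in> F} = {i \<in> A. x i \<in> F}" for F
  proof
    show "\<pi> ` {i \<in> A. x (\<pi> i) \<in> F} \<subseteq> {i \<in> A. x i \<in> F}"
      using permutes_in_image [OF assms] by auto
    show "{i \<in> A. x i \<in> F} \<subseteq> \<pi> ` {i \<in> A. x (\<pi> i) \<in> F}"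
    proof
      fix j assume j: "j \<in> {i \<in> A. x i \<in> F}"
      then obtain i where "i \<in> A" "j = \<pi> i"
        using permutes_image [OF assms] by blast
      with j show "j \<in> \<pi> ` {i \<in> A. x (\<pi> i) \<in> F}" by auto
    qed
  qed
  ultimately show ?thesis
    unfolding face_labels_def image_image by simp
qed

lemma face_lattice_automorphism:
  fixes x :: "'i \<Rightarrow> 'a::euclidean_space"
  assumes "finite A" "inj_on \<pi> A" "image \<pi> ` face_labels x A = face_labels x A"
  shows "let P = convex hull (x ` A); \<phi> = (\<lambda>F. convex hull (x ` \<pi> ` {i \<in> A. x i \<in> F}))
         in bij_betw \<phi> {F. F face_of P} {F. F face_of P} \<and>
            (\<forall>F G. F face_of P \<longrightarrow> G face_of P \<longrightarrow> (F \<subseteq> G \<longleftrightarrow> \<phi> F \<subseteq> \<phi> G))"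
proof -
  define P where "P = convex hull (x ` A)"
  define I where "I F = {i \<in> A. x i \<in> F}" for F
  define \<phi> where "\<phi> F = convex hull (x ` \<pi> ` I F)" for F
  have labels: "face_labels x A = I ` {F. F face_of P}"
    by (simp add: face_labels_def I_def P_def)
  have hull_labels: "convex hull (x ` I F) = F" if "F face_of P" for F
    using face_eq_convex_hull_labels [OF assms(1) that [unfolded P_def]] unfolding I_def by (rule sym)
  have subset_iff: "F \<subseteq> G \<longleftrightarrow> I F \<subseteq> I G" if "F face_of P" "G face_of P" for F G
    using face_subset_iff_labels_subset [OF assms(1) that [unfolded P_def]] by (simp only: I_def)
  have relabel: "\<phi> F face_of P \<and> I (\<phi> F) = \<pi> ` I F" if "F face_of P" for F
  proof -
    have "\<pi> ` I F \<in> image \<pi> ` face_labels x A"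
      using that labels by blast
    then obtain G where G: "G face_of P" "\<pi> ` I F = I G"
      using assms(3) labels by auto
    then have "\<phi> F = G"
      using hull_labels [OF G(1)] unfolding \<phi>_def by simp
    with G show ?thesis by simp
  qed
  have mono: "F \<subseteq> G \<longleftrightarrow> \<phi> F \<subseteq> \<phi> G" if "F face_of P" "G face_of P" for F G
  proof -
    have "F \<subseteq> G \<longleftrightarrow> I F \<subseteq> I G" using subset_iff [OF that] .
    also have "\<dots> \<longleftrightarrow> \<pi> ` I F \<subseteq> \<pi> ` I G"
      by (rule inj_on_image_subset_iff [OF assms(2), symmetric]) (auto simp: I_def)
    also have "\<dots> \<longleftrightarrow> \<phi> F \<subseteq> \<phi> G"
      using subset_iff [of "\<phi> F" "\<phi> G"] relabel [OF that(1)] relabel [OF that(2)] by simp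
    finally show ?thesis .
  qed
  have "G \<in> \<phi> ` {F. F face_of P}" if "G face_of P" for G
  proof -
    have "I G \<in> image \<pi> ` face_labels x A"
      using that assms(3) labels by blast
    then obtain F where "F face_of P" "I G = \<pi> ` I F"
      using labels by auto
    moreover have "\<phi> F = G"
      using calculation hull_labels [OF that] unfolding \<phi>_def by simp
    ultimately show ?thesis by blast
  qed
  moreover have "inj_on \<phi> {F. F face_of P}"
    using mono by (intro inj_onI) (simp add: subset_antisym)
  ultimately have "bij_betw \<phi> {F. F face_of P} {F. F face_of P}"
    using relabel unfolding bij_betw_def by blast
  with mono show ?thesis
    unfolding Let_def P_def [symmetric] I_def [symmetric] \<phi>_def [symmetric] by blast
qed

definition gale_set :: "nat \<Rightarrow> nat \<Rightarrow> nat set \<Rightarrow> bool" where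
  "gale_set n d T \<longleftrightarrow> T \<subseteq> {..<n} \<and> card T = d \<and>
     (\<forall>j \<in> {..<n} - T. \<forall>k \<in> {..<n} - T. even (card {t \<in> T. t < j}) = even (card {t \<in> T. t < k}))"

context
  fixes x :: "nat \<Rightarrow> real^'d::{finite,linorder}" and n :: nat
  assumes n_ge: "CARD('d) + 1 \<le> n" and positive: "positive_position n x"
begin

lemma lifted_minor_pos:
  assumes "S \<subseteq> {..<n}" "card S = CARD('d) + 1"
  shows "lifted_minor x S > 0"
proof -
  let ?m = "CARD('d) + 1"
  let ?s = "\<lambda>c. sorted_list_of_set S ! c"
  have fin: "finite S" using assms(1) finite_subset by blast
  have len: "length (sorted_list_of_set S) = ?m" using assms fin by simp
  have "?s k < n" if "k < ?m" for k
    using that len fin assms(1) nth_mem [of k "sorted_list_of_set S"] by auto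
  moreover have "strict_mono_on {..<?m} ?s"
    using len by (intro strict_mono_onI sorted_wrt_nth_less [of "(<)"]) auto
  ultimately have "ldet ?m (\<lambda>r c. lift_col (x (?s c)) ! r) > 0"
    using positive unfolding positive_position_def by blast
  then show ?thesis unfolding lifted_minor_def ldet_eq_det_colmat .
qed

lemma exists_off_hyperplane:
  assumes "S \<subseteq> {..<n}" "card S = CARD('d) + 1" "a \<noteq> 0"
  shows "\<exists>i \<in> S. a \<bullet> x i \<noteq> b"
proof (rule ccontr)
  let ?m = "CARD('d) + 1"
  assume "\<not> (\<exists>i \<in> S. a \<bullet> x i \<noteq> b)"
  then have on: "a \<bullet> x i = b" if "i \<in> S" for i using that by blast
  have fin: "finite S" using assms(1) finite_subset by blast
  obtain r where r: "r < ?m" "hyperplane_form a b r \<noteq> 0"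
    using hyperplane_form_nonzero [OF assms(3)] by blast
  have "hyperplane_form a b r = 0"
  proof (rule lin_form_eq_0_if_det_nonzero [OF _ _ r(1)])
    show "det (colmat ?m (\<lambda>c. lift_col (x (sorted_list_of_set S ! c)))) \<noteq> 0"
      using lifted_minor_pos [OF assms(1,2)] by (simp add: lifted_minor_def)
    fix c assume "c < ?m"
    then have "sorted_list_of_set S ! c \<in> S"
      using assms(2) fin by (metis nth_mem set_sorted_list_of_set length_sorted_list_of_set)
    then show "lin_form ?m (hyperplane_form a b) (lift_col (x (sorted_list_of_set S ! c))) = 0"
      unfolding lin_form_hyperplane_form using on by simp
  qed
  with r(2) show False by simp
qed

lemma aff_dim_convex_hull_eq: "aff_dim (convex hull (x ` {..<n})) = int CARD('d)"
proof (rule ccontr)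
  let ?P = "convex hull (x ` {..<n})"
  assume "aff_dim ?P \<noteq> int CARD('d)"
  moreover have "aff_dim ?P \<le> int DIM(real^'d::{finite,linorder})" by (rule aff_dim_le_DIM)
  ultimately have "aff_dim ?P < int DIM(real^'d::{finite,linorder})" by simp
  then obtain a b where ab: "a \<noteq> 0" "?P \<subseteq> {y. a \<bullet> y = b}"
    by (rule aff_lowdim_subset_hyperplane)
  have "{..<CARD('d) + 1} \<subseteq> {..<n}" using n_ge by auto
  then have "a \<bullet> x i = b" if "i \<in> {..<CARD('d) + 1}" for i
    using that ab(2) hull_inc [of "x i" "x ` {..<n}"] by auto
  then show False
    using exists_off_hyperplane [of "{..<CARD('d) + 1}" a b] ab(1) n_ge by auto
qed

lemma bordered_minor_sign:
  assumes "T \<subseteq> {..<n}" "card T = CARD('d)" "j \<in> {..<n} - T"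
  shows "0 < (-1) ^ card {t \<in> T. t < j} * bordered_minor x T (x j)"
proof -
  have fin: "finite T" using assms(1) finite_subset by blast
  have "insert j T \<subseteq> {..<n}" "card (insert j T) = CARD('d) + 1"
    using assms fin by auto
  then have "0 < lifted_minor x (insert j T)" by (rule lifted_minor_pos)
  moreover have "(-1::real) ^ card {t \<in> T. t < j} * (-1) ^ card {t \<in> T. t < j} = 1"
    by (simp flip: power_mult_distrib)
  ultimately show ?thesis
    using bordered_minor_at_nonmember [OF fin assms(2), of j x] assms(3) by (simp add: mult.assoc [symmetric])
qed

lemma gale_set_imp_face_labels:
  assumes "gale_set n CARD('d) T"
  shows "\<exists>G. G face_of convex hull (x ` {..<n}) \<and> {i \<in> {..<n}. x i \<in> G} = T"
proof -
  let ?P = "convex hull (x ` {..<n})"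
  have T: "T \<subseteq> {..<n}" "card T = CARD('d)"
    and parity: "\<And>j k. j \<in> {..<n} - T \<Longrightarrow> k \<in> {..<n} - T \<Longrightarrow>
      even (card {t \<in> T. t < j}) = even (card {t \<in> T. t < k})"
    using assms unfolding gale_set_def by blast+
  have fin: "finite T" using T(1) finite_subset by blast
  have "\<not> {..<n} \<subseteq> T"
  proof
    assume "{..<n} \<subseteq> T"
    then have "card {..<n} \<le> card T" by (rule card_mono [OF fin])
    with T(2) n_ge show False by simp
  qed
  then obtain j0 where j0: "j0 \<in> {..<n} - T" by blast
  obtain c c0 where h: "\<And>y. bordered_minor x T y = c \<bullet> y + c0"
    using bordered_minor_affine by blast
  define \<epsilon> :: real where "\<epsilon> = (-1) ^ card {t \<in> T. t < j0}"
  define H where "H = {y. (\<epsilon> *\<^sub>R c) \<bullet> y = - (\<epsilon> * c0)}"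
  have support: "(\<epsilon> *\<^sub>R c) \<bullet> y + \<epsilon> * c0 = \<epsilon> * bordered_minor x T y" for y
    by (simp add: h algebra_simps)
  have on_H: "y \<in> H \<longleftrightarrow> \<epsilon> * bordered_minor x T y = 0" for y
    by (simp only: H_def mem_Collect_eq eq_neg_iff_add_eq_0 support)
  have outside: "0 < \<epsilon> * bordered_minor x T (x j)" if "j \<in> {..<n} - T" for j
  proof -
    have "(-1::real) ^ card {t \<in> T. t < j} = \<epsilon>"
      using parity [OF that j0] by (simp add: \<epsilon>_def minus_one_power_iff)
    then show ?thesis using bordered_minor_sign [OF T that] by simp
  qed
  have inside: "bordered_minor x T (x t) = 0" if "t \<in> T" for t
    using bordered_minor_at_member [OF fin T(2) that] .
  have "- (\<epsilon> * c0) \<le> (\<epsilon> *\<^sub>R c) \<bullet> x i" if "i < n" for i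
  proof (cases "i \<in> T")
    case True
    then show ?thesis using support [of "x i"] inside by simp
  next
    case False
    then show ?thesis using support [of "x i"] outside [of i] that by simp
  qed
  then have "?P \<subseteq> {y. - (\<epsilon> * c0) \<le> (\<epsilon> *\<^sub>R c) \<bullet> y}"
    by (intro hull_minimal convex_halfspace_ge) auto
  then have "?P \<inter> H face_of ?P"
    unfolding H_def by (intro face_of_Int_supporting_hyperplane_ge) auto
  moreover have "{i \<in> {..<n}. x i \<in> ?P \<inter> H} = T"
  proof (intro equalityI subsetI)
    fix i assume "i \<in> {i \<in> {..<n}. x i \<in> ?P \<inter> H}"
    then have "i < n" "\<epsilon> * bordered_minor x T (x i) = 0" using on_H by auto
    then show "i \<in> T" using outside [of i] by (metis DiffI lessThan_iff less_irrefl)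
  next
    fix i assume "i \<in> T"
    then show "i \<in> {i \<in> {..<n}. x i \<in> ?P \<inter> H}"
      using T(1) on_H inside hull_inc [of "x i" "x ` {..<n}"] by auto
  qed
  ultimately show ?thesis by blast
qed

lemma card_facet_labels:
  assumes "G facet_of convex hull (x ` {..<n})"
  shows "card {i \<in> {..<n}. x i \<in> G} = CARD('d)"
proof -
  let ?P = "convex hull (x ` {..<n})"
  let ?I = "{i \<in> {..<n}. x i \<in> G}"
  obtain a b where ab: "a \<noteq> 0" "G = ?P \<inter> {y. a \<bullet> y = b}"
    using facet_of_polyhedron [OF polyhedron_convex_hull assms] by blast
  have "int CARD('d) - 1 = aff_dim G"
    using assms aff_dim_convex_hull_eq unfolding facet_of_def by simp
  also have "\<dots> = aff_dim (x ` ?I)"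
    using face_eq_convex_hull_labels [OF _ facet_of_imp_face_of [OF assms]] by (metis aff_dim_convex_hull finite_lessThan)
  also have "\<dots> \<le> int (card (x ` ?I)) - 1" by (rule aff_dim_le_card) simp
  also have "\<dots> \<le> int (card ?I) - 1" using card_image_le [of ?I x] by simp
  finally have "CARD('d) \<le> card ?I" by simp
  moreover have "\<not> CARD('d) + 1 \<le> card ?I"
  proof
    assume "CARD('d) + 1 \<le> card ?I"
    then obtain S where "S \<subseteq> ?I" "card S = CARD('d) + 1"
      by (meson obtain_subset_with_card_n)
    then show False
      using exists_off_hyperplane [of S a b] ab by auto
  qed
  ultimately show ?thesis by simp
qed

lemma facet_labels_gale_set:
  assumes "G facet_of convex hull (x ` {..<n})"
  shows "gale_set n CARD('d) {i \<in> {..<n}. x i \<in> G}"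
proof -
  let ?P = "convex hull (x ` {..<n})"
  define T where "T = {i \<in> {..<n}. x i \<in> G}"
  obtain a b where ab: "?P \<subseteq> {y. a \<bullet> y \<le> b}" "G = ?P \<inter> {y. a \<bullet> y = b}"
    using facet_of_polyhedron [OF polyhedron_convex_hull assms] by blast
  have T: "T \<subseteq> {..<n}" "card T = CARD('d)"
    using card_facet_labels [OF assms] unfolding T_def by auto
  have on: "a \<bullet> x t = b" if "t \<in> T" for t
    using that ab(2) unfolding T_def by auto
  have below: "a \<bullet> x j - b < 0" if "j \<in> {..<n} - T" for j
    using that ab hull_inc [of "x j" "x ` {..<n}"] unfolding T_def by fastforce
  have "even (card {t \<in> T. t < j}) = even (card {t \<in> T. t < k})"
    if "j \<in> {..<n} - T" "k \<in> {..<n} - T" for j k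
  proof (rule even_iff_even_if_proportional)
    have "bordered_minor x T (x j) \<noteq> 0"
      using bordered_minor_sign [OF T that(1)] by auto
    then show "(a \<bullet> x j - b) * bordered_minor x T (x k) = bordered_minor x T (x j) * (a \<bullet> x k - b)"
      using bordered_minor_proportional [of T a x b] T on finite_subset [OF T(1)] by blast
  qed (use below bordered_minor_sign [OF T] that in auto)
  then show ?thesis
    unfolding gale_set_def T_def [symmetric] using T by blast
qed

lemma face_labels_eq_gale_intersections:
  "face_labels x {..<n} = insert {} ((\<lambda>\<T>. {..<n} \<inter> \<Inter>\<T>) ` Pow (Collect (gale_set n CARD('d))))"
proof -
  let ?P = "convex hull (x ` {..<n})"
  let ?I = "\<lambda>F. {i \<in> {..<n}. x i \<in> F}"
  let ?gale = "insert {} ((\<lambda>\<T>. {..<n} \<inter> \<Inter>\<T>) ` Pow (Collect (gale_set n CARD('d))))"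
  have on_P: "x i \<in> ?P" if "i < n" for i
    using that by (intro hull_inc) auto
  have labels_gale: "?I F \<in> ?gale" if F: "F face_of ?P" for F
  proof (cases "F = {}")
    case False
    define facets where "facets = {G. G facet_of ?P \<and> F \<subseteq> G}"
    have "F = ?P \<inter> \<Inter>facets"
      using face_eq_Int_facets [OF polyhedron_convex_hull [OF finite_imageI [OF finite_lessThan]] F False]
      unfolding facets_def .
    then have "?I F = {..<n} \<inter> \<Inter>(?I ` facets)"
      using on_P by auto
    moreover have "?I ` facets \<in> Pow (Collect (gale_set n CARD('d)))"
      using facet_labels_gale_set unfolding facets_def by auto
    ultimately show ?thesis
      by (intro insertI2 image_eqI)
  qed simp
  have gale_labels: "J \<in> face_labels x {..<n}" if "J \<in> ?gale" for J
  proof (cases "J = {}")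
    case True
    then show ?thesis
      unfolding face_labels_def by (intro image_eqI [of _ _ "{}"]) simp_all
  next
    case False
    with that have "J \<in> (\<lambda>\<T>. {..<n} \<inter> \<Inter>\<T>) ` Pow (Collect (gale_set n CARD('d)))"
      by simp
    then obtain \<T> where J: "J = {..<n} \<inter> \<Inter>\<T>" and "\<T> \<in> Pow (Collect (gale_set n CARD('d)))"
      by (rule imageE)
    then have "\<forall>T \<in> \<T>. \<exists>G. G face_of ?P \<and> ?I G = T"
      using gale_set_imp_face_labels by blast
    then obtain face where face: "\<forall>T \<in> \<T>. face T face_of ?P \<and> ?I (face T) = T"
      by (rule bchoice [elim_format]) blast
    have "\<Inter>(insert ?P (face ` \<T>)) face_of ?P"
      using face by (intro face_of_Inter) (auto intro: face_of_refl)
    moreover have "?I (\<Inter>(insert ?P (face ` \<T>))) = {..<n} \<inter> (\<Inter>T \<in> \<T>. ?I (face T))"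
      using on_P by auto
    moreover have "(\<Inter>T \<in> \<T>. ?I (face T)) = \<Inter>\<T>"
      using face by simp
    ultimately show ?thesis
      unfolding face_labels_def J by (intro image_eqI [rotated]) auto
  qed
  have "face_labels x {..<n} \<subseteq> ?gale"
    unfolding face_labels_def by (rule image_subsetI, rule labels_gale) simp
  moreover have "?gale \<subseteq> face_labels x {..<n}"
    using gale_labels by (rule subsetI)
  ultimately show ?thesis by (rule equalityI)
qed

end

theorem corollary3p5:
  fixes x :: "nat \<Rightarrow> real^'d::{finite,linorder}" and n :: nat and \<pi> :: "nat \<Rightarrow> nat"
  assumes "n \<ge> CARD('d) + 1"
    and "positive_position n x"
    and "\<pi> permutes {..<n}"
    and "positive_position n (\<lambda>i. x (\<pi> i))"
  shows "let P = convex hull (x ` {..<n});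
             \<phi> = (\<lambda>F. convex hull (x ` \<pi> ` {i \<in> {..<n}. x i \<in> F}))
         in bij_betw \<phi> {F. F face_of P} {F. F face_of P} \<and>
            (\<forall>F G. F face_of P \<longrightarrow> G face_of P \<longrightarrow> (F \<subseteq> G \<longleftrightarrow> \<phi> F \<subseteq> \<phi> G))"
proof -
  have "face_labels (\<lambda>i. x (\<pi> i)) {..<n} = face_labels x {..<n}"
    using face_labels_eq_gale_intersections [OF assms(1,2)]
      face_labels_eq_gale_intersections [OF assms(1,4)] by simp
  then have "image \<pi> ` face_labels x {..<n} = face_labels x {..<n}"
    using face_labels_reindex [OF assms(3), of x] by simp
  then show ?thesis
    using face_lattice_automorphism [of "{..<n}" \<pi> x] permutes_inj_on [OF assms(3)] by simp
qed

end
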